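(* Fix $a_1,a_2,b_1,b_2>0$, $p_1,p_2\in(0,1)$, $q_1,q_2>1$, integers $n_1,n_2\ge1$ and exponents $\eta_{i,j}>0$ ($i=1,2$, $j\in\{1,\dots,n_i\}$), and suppose $\eta_{1,i}\eta_{2,j}\in[p_2,q_2]$ for all $i\in\{1,\dots,n_1\}$, $j\in\{1,\dots,n_2\}$ and $\frac{\max_j\eta_{2,j}}{\min_k\eta_{2,k}}\le\frac{q_2}{p_2}$. For $i=1,2$ let $\alpha_i(s)=a_is^{p_i}+b_is^{q_i}$. Then there exists $C>0$ such that for all coefficients $c_{i,j}>0$, setting $\sigma_i(s)=\sum_{j=1}^{n_i}c_{i,j}s^{\eta_{i,j}}$, $\gamma_i:=\alpha_i^{-1}\circ\sigma_i$ and $c_i:=\max_jc_{i,j}$: if $c_2\max_kc_1^{\eta_{2,k}}<C$, then there exist $\hat\gamma_1\in\mathcal{K}^{\mathcal{P}}$ and $\hat\gamma_2\in\mathcal{K}^{\mathcal{P}^{-1}}$ such that $\hat\gamma_i(s)>\gamma_i(s)$ for $i=1,2$ and $\hat\gamma_1\circ\hat\gamma_2(s)<s$ for all $s>0$.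
   Context: $\mathcal{K}_\infty$: continuous strictly increasing unbounded $\alpha:\mathbb{R}_{\ge0}\to\mathbb{R}_{\ge0}$ with $\alpha(0)=0$. $\mathcal{K}^{\mathcal{P}}$: the $\alpha\in\mathcal{K}_\infty$ of the form $\sum_{i=1}^nc_is^{p_i}$ with real $c_i\ne0$, $p_i>0$, and $\alpha'(s)>0$ for $s>0$. $\mathcal{K}^{\mathcal{P}^{-1}}$: the $\alpha\in\mathcal{K}_\infty$ with $\alpha^{-1}\in\mathcal{K}^{\mathcal{P}}$. *)

theory Defs
  imports "HOL-Analysis.Analysis"
begin

text \<open>Class K-infinity, for functions on the nonnegative reals (values at negative
arguments are irrelevant).\<close>
definition K_inf :: "(real \<Rightarrow> real) \<Rightarrow> bool" where
  "K_inf \<alpha> \<longleftrightarrow> continuous_on {0..} \<alpha> \<and> strict_mono_on {0..} \<alpha> \<and> \<alpha> 0 = 0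
     \<and> (\<forall>s\<ge>0. \<alpha> s \<ge> 0) \<and> (\<forall>M. \<exists>s\<ge>0. \<alpha> s > M)"

definition KP :: "(real \<Rightarrow> real) \<Rightarrow> bool" where
  "KP \<alpha> \<longleftrightarrow> K_inf \<alpha>
     \<and> (\<exists>(n::nat) (c::nat \<Rightarrow> real) (p::nat \<Rightarrow> real).
          (\<forall>i\<in>{1..n}. c i \<noteq> 0 \<and> p i > 0)
          \<and> (\<forall>s\<ge>0. \<alpha> s = (\<Sum>i=1..n. c i * s powr p i)))
     \<and> (\<forall>s>0. \<exists>d>0. (\<alpha> has_real_derivative d) (at s))"

definition KPinv :: "(real \<Rightarrow> real) \<Rightarrow> bool" where
  "KPinv \<alpha> \<longleftrightarrow> K_inf \<alpha> \<and> KP (the_inv_into {0..} \<alpha>)"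

definition alphaf :: "real \<Rightarrow> real \<Rightarrow> real \<Rightarrow> real \<Rightarrow> real \<Rightarrow> real" where
  "alphaf a b p q s = a * s powr p + b * s powr q"

end

theory Submission
  imports Defs
begin

text \<open>Let m = min a1 b1, B = 4 / m and h(s) = B c1 (s^\<eta>1,1 + ... + s^\<eta>1,n1),
where ci = max_j ci,j. The gains are h^-1 and h / 2, whose composition is s / 2.
Since \<alpha>1(v) \<ge> m v, \<gamma>1 \<le> \<sigma>1 / m < h / 2. On the other side,
\<gamma>2 < h^-1 amounts to \<sigma>2 \<circ> h < \<alpha>2. As every product \<eta>1,j \<eta>2,k lies in [p2, q2],
the k-th term of \<sigma>2 \<circ> h is at most c2,k (B c1 n1)^\<eta>2,k (s^p2 + s^q2), and
min a2 b2 (s^p2 + s^q2) \<le> \<alpha>2(s). The sum of these coefficients is at most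
c2 max_k c1^\<eta>2,k \<Sum>_k (B n1)^\<eta>2,k, so C = min a2 b2 / \<Sum>_k (B n1)^\<eta>2,k works.\<close>

lemma K_inf_powr_sum:
  fixes c e :: "'i \<Rightarrow> real"
  assumes "finite I" "I \<noteq> {}" and pos: "\<And>i. i \<in> I \<Longrightarrow> 0 < c i \<and> 0 < e i"
  shows "K_inf (\<lambda>s. \<Sum>i\<in>I. c i * s powr e i)"
  unfolding K_inf_def
proof (intro conjI allI impI)
  show "continuous_on {0..} (\<lambda>s. \<Sum>i\<in>I. c i * s powr e i)"
    using pos
    by (intro continuous_on_sum continuous_on_mult continuous_on_const continuous_on_powr'
        continuous_on_id) auto
  show "strict_mono_on {0..} (\<lambda>s. \<Sum>i\<in>I. c i * s powr e i)"
    using pos by (intro strict_mono_onI sum_strict_mono assms) (auto intro: powr_less_mono2)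
  show "(\<Sum>i\<in>I. c i * 0 powr e i) = 0"
    by simp
  show "0 \<le> (\<Sum>i\<in>I. c i * s powr e i)" if "0 \<le> s" for s
    using pos that by (intro sum_nonneg mult_nonneg_nonneg) (auto simp: less_imp_le)
next
  fix M :: real
  obtain i where i: "i \<in> I"
    using assms by auto
  define s where "s = ((\<bar>M\<bar> + 1) / c i) powr (1 / e i)"
  have "\<bar>M\<bar> + 1 = c i * s powr e i"
    using pos[OF i] by (simp add: s_def powr_powr)
  also have "\<dots> \<le> (\<Sum>i\<in>I. c i * s powr e i)"
    using pos i \<open>finite I\<close> by (intro member_le_sum mult_nonneg_nonneg) (auto simp: less_imp_le)
  finally show "\<exists>s\<ge>0. M < (\<Sum>i\<in>I. c i * s powr e i)"
    by (intro exI[of _ s]) (auto simp: s_def)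
qed

lemma KP_powr_sum:
  fixes c e :: "nat \<Rightarrow> real"
  assumes "1 \<le> n" and pos: "\<forall>i\<in>{1..n}. 0 < c i \<and> 0 < e i"
  shows "KP (\<lambda>s. \<Sum>i=1..n. c i * s powr e i)"
  unfolding KP_def
proof (intro conjI allI impI)
  show "K_inf (\<lambda>s. \<Sum>i=1..n. c i * s powr e i)"
    using assms by (intro K_inf_powr_sum) auto
  show "\<exists>(n'::nat) c' p. (\<forall>i\<in>{1..n'}. c' i \<noteq> 0 \<and> 0 < p i) \<and>
      (\<forall>s\<ge>0. (\<Sum>i=1..n. c i * s powr e i) = (\<Sum>i=1..n'. c' i * s powr p i))"
    using pos by (intro exI[of _ n] exI[of _ c] exI[of _ e]) auto
  fix s :: real
  assume "0 < s"
  then have "((\<lambda>s. \<Sum>i=1..n. c i * s powr e i) has_real_derivative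
      (\<Sum>i=1..n. c i * (e i * s powr (e i - 1)))) (at s)"
    by (intro DERIV_sum DERIV_cmult has_real_derivative_powr)
  moreover have "0 < (\<Sum>i=1..n. c i * (e i * s powr (e i - 1)))"
    using pos \<open>0 < s\<close> \<open>1 \<le> n\<close> by (intro sum_pos) auto
  ultimately show "\<exists>d>0. ((\<lambda>s. \<Sum>i=1..n. c i * s powr e i) has_real_derivative d) (at s)"
    by blast
qed

lemma K_inf_nonneg: "K_inf f \<Longrightarrow> 0 \<le> x \<Longrightarrow> 0 \<le> f x"
  unfolding K_inf_def by blast

lemma K_inf_less_iff: "K_inf f \<Longrightarrow> 0 \<le> x \<Longrightarrow> 0 \<le> y \<Longrightarrow> f x < f y \<longleftrightarrow> x < y"
  unfolding K_inf_def by (metis atLeast_iff not_less_iff_gr_or_eq strict_mono_onD)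

lemma K_inf_le_iff: "K_inf f \<Longrightarrow> 0 \<le> x \<Longrightarrow> 0 \<le> y \<Longrightarrow> f x \<le> f y \<longleftrightarrow> x \<le> y"
  using K_inf_less_iff by (metis not_less)

lemma K_inf_pos: "K_inf f \<Longrightarrow> 0 < x \<Longrightarrow> 0 < f x"
  using K_inf_less_iff[of f 0 x] by (simp add: K_inf_def)

lemma K_inf_image:
  assumes "K_inf f"
  shows "f ` {0..} = {0..}"
proof
  show "f ` {0..} \<subseteq> {0..}"
    using K_inf_nonneg[OF assms] by auto
  show "{0..} \<subseteq> f ` {0..}"
  proof
    fix y :: real
    assume "y \<in> {0..}"
    obtain s where "0 \<le> s" "y < f s"
      using assms unfolding K_inf_def by auto
    moreover have "continuous_on {0..s} f"
      using assms unfolding K_inf_def by (auto intro: continuous_on_subset)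
    ultimately obtain x where "0 \<le> x" "f x = y"
      using IVT'[of f 0 y s] \<open>y \<in> {0..}\<close> assms unfolding K_inf_def by auto
    then show "y \<in> f ` {0..}"
      by auto
  qed
qed

lemma K_inf_inj_on: "K_inf f \<Longrightarrow> inj_on f {0..}"
  unfolding K_inf_def using strict_mono_on_imp_inj_on by blast

lemma K_inf_the_inv_into_nonneg:
  assumes "K_inf f" "0 \<le> y"
  shows "0 \<le> the_inv_into {0..} f y"
  using the_inv_into_into[OF K_inf_inj_on[OF assms(1)], of y "{0..}"] K_inf_image[OF assms(1)] assms(2)
  by simp

lemma K_inf_f_the_inv_into:
  assumes "K_inf f" "0 \<le> y"
  shows "f (the_inv_into {0..} f y) = y"
  using f_the_inv_into_f[OF K_inf_inj_on[OF assms(1)], of y] K_inf_image[OF assms(1)] assms(2)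
  by simp

lemma K_inf_the_inv_into_f: "K_inf f \<Longrightarrow> 0 \<le> x \<Longrightarrow> the_inv_into {0..} f (f x) = x"
  using the_inv_into_f_f[OF K_inf_inj_on] by simp

lemma continuous_on_the_inv_into_K_inf:
  assumes f: "K_inf f"
  shows "continuous_on {0..} (the_inv_into {0..} f)"
  unfolding continuous_on_iff
proof (intro ballI allI impI)
  define g where "g = the_inv_into {0..} f"
  fix y e :: real
  assume "y \<in> {0..}" "0 < e"
  define x where "x = g y"
  have x: "0 \<le> x" "f x = y"
    using \<open>y \<in> {0..}\<close> f K_inf_the_inv_into_nonneg K_inf_f_the_inv_into by (auto simp: x_def g_def)
  \<comment> \<open>\<open>g\<close> maps \<open>(f (x - e), f (x + e))\<close> into \<open>(x - e, x + e)\<close>; if \<open>x < e\<close> the lower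
     bound holds on all of \<open>{0..}\<close>, so the second entry is arbitrary\<close>
  define d where "d = min (f (x + e) - y) (if e \<le> x then y - f (x - e) else 1)"
  have "0 < d"
    using K_inf_less_iff[OF f] x \<open>0 < e\<close> by (auto simp: d_def)
  moreover have "dist (g y') (g y) < e" if "y' \<in> {0..}" "dist y' y < d" for y'
  proof -
    have y': "0 \<le> g y'" "f (g y') = y'"
      using that f K_inf_the_inv_into_nonneg K_inf_f_the_inv_into by (auto simp: g_def)
    have "g y' < x + e"
      using K_inf_less_iff[OF f, of "g y'" "x + e"] y' x that \<open>0 < e\<close>
      by (auto simp: d_def dist_real_def)
    moreover have "x - e < g y'"
      using K_inf_less_iff[OF f, of "x - e" "g y'"] y' that
      by (cases "e \<le> x") (auto simp: d_def dist_real_def)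
    ultimately show ?thesis
      by (simp add: x_def dist_real_def)
  qed
  ultimately show "\<exists>d>0. \<forall>y'\<in>{0..}. dist y' y < d \<longrightarrow> dist (g y') (g y) < e"
    by blast
qed

lemma K_inf_the_inv_into:
  assumes f: "K_inf f"
  shows "K_inf (the_inv_into {0..} f)"
  unfolding K_inf_def
proof (intro conjI allI impI continuous_on_the_inv_into_K_inf[OF f])
  show "strict_mono_on {0..} (the_inv_into {0..} f)"
  proof (rule strict_mono_onI)
    fix r s :: real
    assume "r \<in> {0..}" "s \<in> {0..}" "r < s"
    then show "the_inv_into {0..} f r < the_inv_into {0..} f s"
      using K_inf_less_iff[OF f, of "the_inv_into {0..} f r" "the_inv_into {0..} f s"]
        K_inf_the_inv_into_nonneg[OF f] K_inf_f_the_inv_into[OF f] by simp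
  qed
  show "the_inv_into {0..} f 0 = 0"
    using K_inf_the_inv_into_f[OF f, of 0] f by (simp add: K_inf_def)
  show "0 \<le> the_inv_into {0..} f s" if "0 \<le> s" for s
    using K_inf_the_inv_into_nonneg[OF f that] .
  show "\<exists>s\<ge>0. M < the_inv_into {0..} f s" for M
    using K_inf_the_inv_into_f[OF f, of "\<bar>M\<bar> + 1"] K_inf_nonneg[OF f, of "\<bar>M\<bar> + 1"]
    by (intro exI[of _ "f (\<bar>M\<bar> + 1)"]) auto
qed

lemma K_inf_cong:
  assumes h: "K_inf h" and eq: "\<And>x. 0 \<le> x \<Longrightarrow> f x = h x"
  shows "K_inf f"
  unfolding K_inf_def
proof (intro conjI allI impI)
  show "continuous_on {0..} f"
    using h eq continuous_on_cong[of "{0..}" "{0..}" f h] by (simp add: K_inf_def)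
  show "strict_mono_on {0..} f"
    using h eq by (auto simp: K_inf_def strict_mono_on_def)
  show "f 0 = 0"
    using h eq by (simp add: K_inf_def)
  show "0 \<le> f s" if "0 \<le> s" for s
    using h eq that by (simp add: K_inf_def)
  show "\<exists>s\<ge>0. M < f s" for M
  proof -
    obtain s where "0 \<le> s" "M < h s"
      using h unfolding K_inf_def by blast
    then show ?thesis
      using eq by auto
  qed
qed

lemma KP_cong:
  assumes h: "KP h" and eq: "\<And>x. 0 \<le> x \<Longrightarrow> f x = h x"
  shows "KP f"
  unfolding KP_def
proof (intro conjI allI impI)
  show "K_inf f"
    using K_inf_cong[OF _ eq] h by (simp add: KP_def)
  obtain n :: nat and c p where "\<forall>i\<in>{1..n}. c i \<noteq> 0 \<and> 0 < p i" "\<forall>s\<ge>0. h s = (\<Sum>i=1..n. c i * s powr p i)"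
    using h unfolding KP_def by blast
  then show "\<exists>(n::nat) (c::nat \<Rightarrow> real) p. (\<forall>i\<in>{1..n}. c i \<noteq> 0 \<and> 0 < p i)
      \<and> (\<forall>s\<ge>0. f s = (\<Sum>i=1..n. c i * s powr p i))"
    using eq by (intro exI[of _ n] exI[of _ c] exI[of _ p]) simp
  fix s :: real
  assume "0 < s"
  then obtain d where "0 < d" "(h has_real_derivative d) (at s)"
    using h unfolding KP_def by blast
  moreover have "(f has_real_derivative d) (at s)"
    using has_field_derivative_transform_within_open[of h d s "{0<..}" f] calculation(2) \<open>0 < s\<close> eq
    by simp
  ultimately show "\<exists>d>0. (f has_real_derivative d) (at s)"
    by blast
qed

lemma KPinv_the_inv_into:
  assumes h: "KP h"
  shows "KPinv (the_inv_into {0..} h)"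
proof -
  have Kh: "K_inf h"
    using h by (simp add: KP_def)
  have "the_inv_into {0..} (the_inv_into {0..} h) x = h x" if "0 \<le> x" for x
    using K_inf_the_inv_into_f[OF K_inf_the_inv_into[OF Kh], of "h x"]
      K_inf_the_inv_into_f[OF Kh that] K_inf_nonneg[OF Kh that] by simp
  then show ?thesis
    unfolding KPinv_def using K_inf_the_inv_into[OF Kh] KP_cong[OF h] by blast
qed

lemma K_inf_the_inv_into_comp_less:
  assumes \<alpha>: "K_inf \<alpha>" and \<sigma>: "K_inf \<sigma>" and h: "K_inf h"
    and below: "\<And>u. 0 < u \<Longrightarrow> \<sigma> (h u) < \<alpha> u" and "0 < s"
  shows "the_inv_into {0..} \<alpha> (\<sigma> s) < the_inv_into {0..} h s"
proof -
  define v where "v = the_inv_into {0..} \<alpha> (\<sigma> s)"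
  define x where "x = the_inv_into {0..} h s"
  have "0 < \<sigma> s"
    using K_inf_pos[OF \<sigma> \<open>0 < s\<close>] .
  then have v: "0 \<le> v" "\<alpha> v = \<sigma> s"
    using K_inf_the_inv_into_nonneg[OF \<alpha>] K_inf_f_the_inv_into[OF \<alpha>] by (auto simp: v_def)
  then have "0 < v"
    using \<open>0 < \<sigma> s\<close> \<alpha> by (auto simp: K_inf_def order_le_less)
  have x: "0 \<le> x" "h x = s"
    using K_inf_the_inv_into_nonneg[OF h] K_inf_f_the_inv_into[OF h] \<open>0 < s\<close> by (auto simp: x_def)
  show ?thesis
  proof (rule ccontr)
    assume "\<not> ?thesis"
    then have "s \<le> h v"
      using K_inf_le_iff[OF h x(1) v(1)] x by (simp add: v_def x_def)
    then have "\<sigma> s \<le> \<sigma> (h v)"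
      using K_inf_le_iff[OF \<sigma>] K_inf_nonneg[OF h v(1)] \<open>0 < s\<close> by simp
    also have "\<dots> < \<alpha> v"
      using below[OF \<open>0 < v\<close>] .
    finally show False
      using v by simp
  qed
qed

lemma powr_le_powr_add_powr:
  fixes u :: real
  assumes "0 \<le> u" "p \<le> e" "e \<le> q"
  shows "u powr e \<le> u powr p + u powr q"
proof (cases "u \<le> 1")
  case True
  then have "u powr e \<le> u powr p"
    using powr_mono' assms by blast
  then show ?thesis
    by (simp add: add_increasing2)
next
  case False
  then have "u powr e \<le> u powr q"
    using powr_mono assms by simp
  then show ?thesis
    by (simp add: add_increasing)
qed

lemma powr_sum_le_card_powr_mult:
  fixes x :: "'i \<Rightarrow> real"
  assumes "finite I" "0 < e" "0 \<le> T" and x: "\<And>j. j \<in> I \<Longrightarrow> 0 \<le> x j \<and> x j powr e \<le> T"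
  shows "(\<Sum>j\<in>I. x j) powr e \<le> real (card I) powr e * T"
proof -
  have bound: "x j \<le> T powr (1 / e)" if "j \<in> I" for j
  proof -
    have "x j = (x j powr e) powr (1 / e)"
      using x[OF that] \<open>0 < e\<close> by (simp add: powr_powr)
    also have "\<dots> \<le> T powr (1 / e)"
      using x[OF that] \<open>0 < e\<close> by (intro powr_mono2) auto
    finally show ?thesis .
  qed
  have "(\<Sum>j\<in>I. x j) \<le> real (card I) * T powr (1 / e)"
    by (rule sum_bounded_above[of I x, OF bound, simplified])
  then have "(\<Sum>j\<in>I. x j) powr e \<le> (real (card I) * T powr (1 / e)) powr e"
    using x \<open>0 < e\<close> by (intro powr_mono2 sum_nonneg) auto
  also have "\<dots> = real (card I) powr e * T"
    using \<open>0 < e\<close> \<open>0 \<le> T\<close> by (simp add: powr_mult powr_powr)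
  finally show ?thesis .
qed

lemma sum_powr_sum_powr_le:
  fixes c \<eta>2 :: "'k \<Rightarrow> real" and \<eta>1 :: "'j \<Rightarrow> real" and d :: real
  assumes "finite I" "0 \<le> d" "0 < u"
    and c: "\<And>k. k \<in> K \<Longrightarrow> 0 \<le> c k" and \<eta>2: "\<And>k. k \<in> K \<Longrightarrow> 0 < \<eta>2 k"
    and \<eta>: "\<And>j k. j \<in> I \<Longrightarrow> k \<in> K \<Longrightarrow> p \<le> \<eta>1 j * \<eta>2 k \<and> \<eta>1 j * \<eta>2 k \<le> q"
  shows "(\<Sum>k\<in>K. c k * (\<Sum>j\<in>I. d * u powr \<eta>1 j) powr \<eta>2 k)
    \<le> (\<Sum>k\<in>K. c k * (d * card I) powr \<eta>2 k) * (u powr p + u powr q)"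
proof -
  define T where "T = u powr p + u powr q"
  have "(\<Sum>j\<in>I. d * u powr \<eta>1 j) powr \<eta>2 k \<le> (d * card I) powr \<eta>2 k * T" if k: "k \<in> K" for k
  proof -
    have "(d * u powr \<eta>1 j) powr \<eta>2 k \<le> d powr \<eta>2 k * T" if "j \<in> I" for j
      using powr_le_powr_add_powr[of u p "\<eta>1 j * \<eta>2 k" q] \<eta>[OF that k] \<open>0 < u\<close>
      by (simp add: T_def powr_mult powr_powr mult_left_mono)
    then have "(\<Sum>j\<in>I. d * u powr \<eta>1 j) powr \<eta>2 k \<le> real (card I) powr \<eta>2 k * (d powr \<eta>2 k * T)"
      using \<open>finite I\<close> \<eta>2[OF k] \<open>0 \<le> d\<close> by (intro powr_sum_le_card_powr_mult) (auto simp: T_def)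
    then show ?thesis
      by (simp add: powr_mult mult_ac)
  qed
  then have "(\<Sum>k\<in>K. c k * (\<Sum>j\<in>I. d * u powr \<eta>1 j) powr \<eta>2 k) \<le> (\<Sum>k\<in>K. c k * ((d * card I) powr \<eta>2 k * T))"
    using c by (intro sum_mono mult_left_mono) auto
  then show ?thesis
    unfolding T_def sum_distrib_right by (simp add: mult_ac)
qed

lemma sum_mult_powr_mult_le:
  fixes c e :: "'k \<Rightarrow> real"
  assumes "finite K" "0 \<le> x" "0 \<le> y" and c: "\<And>k. k \<in> K \<Longrightarrow> 0 \<le> c k \<and> c k \<le> M"
  shows "(\<Sum>k\<in>K. c k * (x * y) powr e k) \<le> M * Max ((\<lambda>k. x powr e k) ` K) * (\<Sum>k\<in>K. y powr e k)"
proof -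
  have "c k * (x * y) powr e k \<le> M * Max ((\<lambda>k. x powr e k) ` K) * y powr e k" if "k \<in> K" for k
  proof -
    have "x powr e k \<le> Max ((\<lambda>k. x powr e k) ` K)"
      using \<open>finite K\<close> that by (intro Max_ge) auto
    moreover have "0 \<le> x powr e k"
      by simp
    ultimately have "c k * (x powr e k * y powr e k) \<le> M * (Max ((\<lambda>k. x powr e k) ` K) * y powr e k)"
      using c[OF that] by (intro mult_mono mult_right_mono) auto
    then show ?thesis
      by (simp add: powr_mult mult_ac)
  qed
  then show ?thesis
    by (subst sum_distrib_left) (rule sum_mono)
qed

lemma K_inf_alphaf: "0 < a \<Longrightarrow> 0 < b \<Longrightarrow> 0 < p \<Longrightarrow> 0 < q \<Longrightarrow> K_inf (alphaf a b p q)"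
  using K_inf_powr_sum[of "{0::nat, 1}" "\<lambda>i. if i = 0 then a else b" "\<lambda>i. if i = 0 then p else q"]
  by (simp add: alphaf_def[abs_def])

lemma min_mult_le_alphaf: "0 \<le> a \<Longrightarrow> 0 \<le> b \<Longrightarrow> min a b * (u powr p + u powr q) \<le> alphaf a b p q u"
  unfolding alphaf_def distrib_left by (intro add_mono mult_right_mono) auto

lemma min_mult_le_alphaf_linear:
  assumes "0 \<le> a" "0 \<le> b" "p \<le> 1" "1 \<le> q" "0 \<le> v"
  shows "min a b * v \<le> alphaf a b p q v"
proof -
  have "v \<le> v powr p + v powr q"
    using powr_le_powr_add_powr[of v p 1 q] assms by simp
  then have "min a b * v \<le> min a b * (v powr p + v powr q)"
    using assms by (intro mult_left_mono) auto
  also have "\<dots> \<le> alphaf a b p q v"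
    using min_mult_le_alphaf assms by blast
  finally show ?thesis .
qed

lemma the_inv_into_alphaf_le:
  assumes "0 < a" "0 < b" "0 < p" "p \<le> 1" "1 \<le> q" "0 \<le> y"
  shows "the_inv_into {0..} (alphaf a b p q) y \<le> y / min a b"
proof -
  define v where "v = the_inv_into {0..} (alphaf a b p q) y"
  have K: "K_inf (alphaf a b p q)"
    using assms by (intro K_inf_alphaf) auto
  have "0 \<le> v" "alphaf a b p q v = y"
    using K_inf_the_inv_into_nonneg[OF K] K_inf_f_the_inv_into[OF K] assms by (auto simp: v_def)
  then have "min a b * v \<le> y"
    using min_mult_le_alphaf_linear[of a b p q v] assms by simp
  then show ?thesis
    using assms by (simp add: v_def pos_le_divide_eq mult.commute)
qed

lemma the_inv_into_alphaf_powr_sum_less: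
  fixes c \<eta> :: "'i \<Rightarrow> real"
  assumes "0 < a" "0 < b" "0 < p" "p \<le> 1" "1 \<le> q" "finite I" "I \<noteq> {}"
    and c: "\<And>j. j \<in> I \<Longrightarrow> 0 < c j \<and> c j \<le> M" and "M < K * min a b" and "0 < s"
  shows "the_inv_into {0..} (alphaf a b p q) (\<Sum>j\<in>I. c j * s powr \<eta> j) < (\<Sum>j\<in>I. K * s powr \<eta> j)"
proof -
  have "the_inv_into {0..} (alphaf a b p q) (\<Sum>j\<in>I. c j * s powr \<eta> j) \<le> (\<Sum>j\<in>I. c j * s powr \<eta> j) / min a b"
    using c assms by (intro the_inv_into_alphaf_le sum_nonneg) (auto simp: less_imp_le)
  also have "\<dots> \<le> (\<Sum>j\<in>I. M * s powr \<eta> j) / min a b"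
    using c assms by (intro divide_right_mono sum_mono mult_right_mono) auto
  also have "\<dots> = (\<Sum>j\<in>I. M / min a b * s powr \<eta> j)"
    by (simp add: sum_divide_distrib)
  also have "\<dots> < (\<Sum>j\<in>I. K * s powr \<eta> j)"
    using assms by (intro sum_strict_mono mult_strict_right_mono) (auto simp: pos_divide_less_eq)
  finally show ?thesis .
qed

lemma powr_sum_comp_less_alphaf:
  fixes c \<eta>2 :: "'k \<Rightarrow> real" and \<eta>1 :: "'j \<Rightarrow> real" and d :: real
  assumes "0 < a" "0 < b" "finite I" "0 \<le> d" "0 < u"
    and "\<And>k. k \<in> K \<Longrightarrow> 0 \<le> c k" "\<And>k. k \<in> K \<Longrightarrow> 0 < \<eta>2 k"
    and "\<And>j k. j \<in> I \<Longrightarrow> k \<in> K \<Longrightarrow> p \<le> \<eta>1 j * \<eta>2 k \<and> \<eta>1 j * \<eta>2 k \<le> q"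
    and small: "(\<Sum>k\<in>K. c k * (d * card I) powr \<eta>2 k) < min a b"
  shows "(\<Sum>k\<in>K. c k * (\<Sum>j\<in>I. d * u powr \<eta>1 j) powr \<eta>2 k) < alphaf a b p q u"
proof -
  have "0 < u powr p + u powr q"
    using \<open>0 < u\<close> by (simp add: add_pos_pos)
  have "(\<Sum>k\<in>K. c k * (\<Sum>j\<in>I. d * u powr \<eta>1 j) powr \<eta>2 k)
      \<le> (\<Sum>k\<in>K. c k * (d * card I) powr \<eta>2 k) * (u powr p + u powr q)"
    using assms by (intro sum_powr_sum_powr_le) auto
  also have "\<dots> < min a b * (u powr p + u powr q)"
    using small \<open>0 < u powr p + u powr q\<close> by simp
  also have "\<dots> \<le> alphaf a b p q u"
    using assms by (intro min_mult_le_alphaf) auto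
  finally show ?thesis .
qed

theorem lemma10:
  fixes a1 a2 b1 b2 p1 p2 q1 q2 :: real
    and n1 n2 :: nat
    and \<eta>1 \<eta>2 :: "nat \<Rightarrow> real"
  assumes "a1 > 0" "a2 > 0" "b1 > 0" "b2 > 0"
    and "0 < p1" "p1 < 1" "0 < p2" "p2 < 1" "q1 > 1" "q2 > 1"
    and "n1 \<ge> 1" "n2 \<ge> 1"
    and "\<forall>j\<in>{1..n1}. \<eta>1 j > 0" "\<forall>j\<in>{1..n2}. \<eta>2 j > 0"
    and "\<forall>i\<in>{1..n1}. \<forall>j\<in>{1..n2}. p2 \<le> \<eta>1 i * \<eta>2 j \<and> \<eta>1 i * \<eta>2 j \<le> q2"
    and "Max (\<eta>2 ` {1..n2}) / Min (\<eta>2 ` {1..n2}) \<le> q2 / p2"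
  shows "\<exists>C>0. \<forall>c1 c2 :: nat \<Rightarrow> real.
           (\<forall>j\<in>{1..n1}. c1 j > 0) \<longrightarrow> (\<forall>j\<in>{1..n2}. c2 j > 0) \<longrightarrow>
           (let \<sigma>1 = (\<lambda>s. \<Sum>j=1..n1. c1 j * s powr \<eta>1 j);
                \<sigma>2 = (\<lambda>s. \<Sum>j=1..n2. c2 j * s powr \<eta>2 j);
                \<gamma>1 = the_inv_into {0..} (alphaf a1 b1 p1 q1) \<circ> \<sigma>1;
                \<gamma>2 = the_inv_into {0..} (alphaf a2 b2 p2 q2) \<circ> \<sigma>2;
                cm1 = Max (c1 ` {1..n1});
                cm2 = Max (c2 ` {1..n2})
            in cm2 * Max ((\<lambda>k. cm1 powr \<eta>2 k) ` {1..n2}) < C \<longrightarrow>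
               (\<exists>g1 g2. KP g1 \<and> KPinv g2 \<and>
                  (\<forall>s>0. g1 s > \<gamma>1 s \<and> g2 s > \<gamma>2 s \<and> g1 (g2 s) < s)))"
proof -
  define B where "B = 4 / min a1 b1"
  define S where "S = (\<Sum>k=1..n2. (B * n1) powr \<eta>2 k)"
  have "0 < B" "0 < S"
    using assms by (auto simp: B_def S_def intro!: sum_pos)
  show ?thesis
  proof (unfold Let_def, intro exI[of _ "min a2 b2 / S"] conjI allI impI)
    show "0 < min a2 b2 / S"
      using assms \<open>0 < S\<close> by simp
    fix c1 c2 :: "nat \<Rightarrow> real"
    assume "\<forall>j\<in>{1..n1}. 0 < c1 j" "\<forall>j\<in>{1..n2}. 0 < c2 j"
    define cm1 where "cm1 = Max (c1 ` {1..n1})"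
    define cm2 where "cm2 = Max (c2 ` {1..n2})"
    define \<sigma>1 where "\<sigma>1 = (\<lambda>s. \<Sum>j=1..n1. c1 j * s powr \<eta>1 j)"
    define \<sigma>2 where "\<sigma>2 = (\<lambda>s. \<Sum>j=1..n2. c2 j * s powr \<eta>2 j)"
    define h where "h = (\<lambda>s. \<Sum>j=1..n1. B * cm1 * s powr \<eta>1 j)"
    define g1 where "g1 = (\<lambda>s. \<Sum>j=1..n1. B * cm1 / 2 * s powr \<eta>1 j)"
    assume "cm2 * Max ((\<lambda>k. cm1 powr \<eta>2 k) ` {1..n2}) < min a2 b2 / S"
    have c1: "\<And>j. j \<in> {1..n1} \<Longrightarrow> 0 < c1 j \<and> c1 j \<le> cm1"
      and c2: "\<And>j. j \<in> {1..n2} \<Longrightarrow> 0 < c2 j \<and> c2 j \<le> cm2"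
      using \<open>\<forall>j\<in>{1..n1}. 0 < c1 j\<close> \<open>\<forall>j\<in>{1..n2}. 0 < c2 j\<close> by (auto simp: cm1_def cm2_def)
    have "0 < cm1"
      using c1[of 1] \<open>n1 \<ge> 1\<close> by force
    have "KP h" "KP g1"
      unfolding h_def g1_def using assms \<open>0 < B\<close> \<open>0 < cm1\<close> by (intro KP_powr_sum; simp)+
    have "(\<Sum>k=1..n2. c2 k * (B * cm1 * card {1..n1}) powr \<eta>2 k)
        \<le> cm2 * Max ((\<lambda>k. cm1 powr \<eta>2 k) ` {1..n2}) * S"
      using sum_mult_powr_mult_le[of "{1..n2}" cm1 "B * n1" c2 cm2 \<eta>2] c2 \<open>0 < B\<close> \<open>0 < cm1\<close>
      by (simp add: S_def less_imp_le mult_ac)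
    also have "\<dots> < min a2 b2"
      using \<open>cm2 * _ < min a2 b2 / S\<close> \<open>0 < S\<close> by (simp add: pos_less_divide_eq)
    finally have "\<sigma>2 (h u) < alphaf a2 b2 p2 q2 u" if "0 < u" for u
      unfolding \<sigma>2_def h_def using assms c2 \<open>0 < B\<close> \<open>0 < cm1\<close> that
      by (intro powr_sum_comp_less_alphaf) (auto simp: less_imp_le)
    moreover have "K_inf (alphaf a2 b2 p2 q2)" "K_inf \<sigma>2" "K_inf h"
      using assms c2 \<open>KP h\<close> unfolding \<sigma>2_def by (auto simp: KP_def intro!: K_inf_alphaf K_inf_powr_sum)
    ultimately have \<gamma>2: "the_inv_into {0..} (alphaf a2 b2 p2 q2) (\<sigma>2 s) < the_inv_into {0..} h s"
      if "0 < s" for s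
      using K_inf_the_inv_into_comp_less[of "alphaf a2 b2 p2 q2" \<sigma>2 h s] that by blast
    have \<gamma>1: "the_inv_into {0..} (alphaf a1 b1 p1 q1) (\<sigma>1 s) < g1 s" if "0 < s" for s
      unfolding \<sigma>1_def g1_def using assms c1 \<open>0 < cm1\<close> that
      by (intro the_inv_into_alphaf_powr_sum_less[where M = cm1]) (auto simp: B_def)
    have comp: "g1 (the_inv_into {0..} h s) < s" if "0 < s" for s
      using K_inf_f_the_inv_into[OF \<open>K_inf h\<close>, of s] that
      by (simp add: g1_def h_def sum_divide_distrib[symmetric])
    show "\<exists>g1 g2. KP g1 \<and> KPinv g2 \<and> (\<forall>s>0. (the_inv_into {0..} (alphaf a1 b1 p1 q1) \<circ> \<sigma>1) s < g1 s
        \<and> (the_inv_into {0..} (alphaf a2 b2 p2 q2) \<circ> \<sigma>2) s < g2 s \<and> g1 (g2 s) < s)"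
      by (rule exI[of _ g1], rule exI[of _ "the_inv_into {0..} h"],
          use comp \<gamma>1 \<gamma>2 \<open>KP g1\<close> KPinv_the_inv_into[OF \<open>KP h\<close>] in auto)
  qed
qed

end
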